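(* Let $f:[0,1]\to\mathbb{R}$ with $f(0),f(1)\in\mathbb{Z}$, and let $n\in\mathbb{N}_+$. Set, for $x\in[0,1]$, \[ \varphi_n(x):=(n+1)\int_0^1 t(1-t)^{n(1-x)}\frac{(1-t)^{nx-1}-t^{nx-1}}{1-2t}\,dt. \] (a) If $f(x)-\varphi_n(x)$ is monotone increasing on $[0,1]$, then $\widetilde{B}_n(f)$ and $\widehat{B}_n(f)$ are monotone increasing on $[0,1]$. (b) If $f(x)+\varphi_n(x)$ is monotone decreasing on $[0,1]$, then $\widetilde{B}_n(f)$ and $\widehat{B}_n(f)$ are monotone decreasing on $[0,1]$.
   Context: For $n\in\mathbb{N}_+$ and $f:[0,1]\to\mathbb{R}$, define $\widetilde{B}_n(f)(x):=\sum_{k=0}^n \left[f\left(\frac{k}{n}\right)\binom{n}{k}\right]x^k(1-x)^{n-k}$, where $[\alpha]$ is the largest integer $\le\alpha$, and $\widehat{B}_n(f)(x):=\sum_{k=0}^n \left\langle f\left(\frac{k}{n}\right)\binom{n}{k}\right\rangle x^k(1-x)^{n-k}$, where $\langle\alpha\rangle$ is the integer nearest to $\alpha$ (when $\alpha$ is a half-integer, $\langle\alpha\rangle$ may be either neighbouring integer, chosen arbitrarily; the result holds for any such choice). Monotone increasing/decreasing are meant in the non-strict sense. *)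

theory Defs
  imports "HOL-Analysis.Analysis"
begin

definition Btilde :: "nat \<Rightarrow> (real \<Rightarrow> real) \<Rightarrow> real \<Rightarrow> real" where
  "Btilde n f x = (\<Sum>k\<le>n. real_of_int \<lfloor>f (real k / real n) * real (n choose k)\<rfloor>
                         * x ^ k * (1 - x) ^ (n - k))"

definition nearest_rounding :: "nat \<Rightarrow> (real \<Rightarrow> real) \<Rightarrow> (nat \<Rightarrow> int) \<Rightarrow> bool" where
  "nearest_rounding n f r \<longleftrightarrow>
     (\<forall>k\<le>n. \<bar>f (real k / real n) * real (n choose k) - real_of_int (r k)\<bar> \<le> 1/2)"

definition Bhat :: "nat \<Rightarrow> (nat \<Rightarrow> int) \<Rightarrow> real \<Rightarrow> real" where
  "Bhat n r x = (\<Sum>k\<le>n. real_of_int (r k) * x ^ k * (1 - x) ^ (n - k))"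

definition phi :: "nat \<Rightarrow> real \<Rightarrow> real" where
  "phi n x = (real n + 1) * integral {0..1} (\<lambda>t.
      t * (1 - t) powr (real n * (1 - x)) *
      (((1 - t) powr (real n * x - 1) - t powr (real n * x - 1)) / (1 - 2 * t)))"

end

theory Submission
  imports Defs
begin

(* At the nodes k/n the integrand of phi_n is, away from t = 1/2, a sum of products
   t^j (1-t)^(n-1-j), so phi_n(k/n) is a sum of Beta integrals and
   phi_n((k+1)/n) - phi_n(k/n) = (n+1) / ((k+1) C(n,k+1)).
   Hence monotonicity of f - phi_n makes the exact coefficients u_k = f(k/n) C(n,k) satisfy
   u_k (n-k) + (n+1) <= u_(k+1) (k+1).  The derivative of sum_k c_k x^k (1-x)^(n-k) is
   sum_k (c_(k+1) (k+1) - c_k (n-k)) x^k (1-x)^(n-1-k), and since n+1 = (n-k) + (k+1),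
   replacing each u_k by a value within distance 1 (its floor, or a nearest integer) keeps
   these differences nonnegative.  Part (b) is the mirror image, obtained by negating all
   coefficients. *)

definition bernstein_form :: "nat \<Rightarrow> (nat \<Rightarrow> real) \<Rightarrow> real \<Rightarrow> real" where
  "bernstein_form n c x = (\<Sum>k\<le>n. c k * x ^ k * (1 - x) ^ (n - k))"

lemma has_real_derivative_bernstein_form:
  "(bernstein_form n c has_real_derivative
     (\<Sum>k<n. (c (Suc k) * real (Suc k) - c k * real (n - k)) * x ^ k * (1 - x) ^ (n - 1 - k))) (at x)"
proof (cases n)
  case 0
  then show ?thesis by (simp add: bernstein_form_def[abs_def])
next
  case (Suc m)
  have "(bernstein_form n c has_real_derivative
      (\<Sum>k\<le>n. c k * real k * x ^ (k - 1) * (1 - x) ^ (n - k))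
      - (\<Sum>k\<le>n. c k * real (n - k) * x ^ k * (1 - x) ^ (n - k - 1))) (at x)"
    unfolding bernstein_form_def[abs_def] sum_subtractf[symmetric]
    by (rule derivative_eq_intros refl | simp)+ (simp add: algebra_simps)
  also have "(\<Sum>k\<le>n. c k * real k * x ^ (k - 1) * (1 - x) ^ (n - k))
      = (\<Sum>k\<le>m. c (Suc k) * real (Suc k) * x ^ k * (1 - x) ^ (m - k))"
    unfolding Suc by (subst sum.atMost_Suc_shift) simp
  also have "(\<Sum>k\<le>n. c k * real (n - k) * x ^ k * (1 - x) ^ (n - k - 1))
      = (\<Sum>k\<le>m. c k * real (n - k) * x ^ k * (1 - x) ^ (m - k))"
    unfolding Suc by (subst sum.atMost_Suc) simp
  finally show ?thesis
    unfolding Suc lessThan_Suc_atMost sum_subtractf[symmetric] by (simp add: algebra_simps)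
qed

lemma bernstein_form_mono_on:
  assumes "\<And>k. k < n \<Longrightarrow> c k * real (n - k) \<le> c (Suc k) * real (Suc k)"
  shows "mono_on {0..1} (bernstein_form n c)"
proof (rule mono_onI)
  fix x y :: real
  assume "x \<in> {0..1}" "y \<in> {0..1}" "x \<le> y"
  then show "bernstein_form n c x \<le> bernstein_form n c y"
    using assms by (intro deriv_nonneg_imp_mono[OF has_real_derivative_bernstein_form])
      (auto intro!: sum_nonneg mult_nonneg_nonneg)
qed

lemma bernstein_form_uminus: "bernstein_form n (\<lambda>k. - c k) = (\<lambda>x. - bernstein_form n c x)"
  by (simp add: bernstein_form_def[abs_def] sum_negf)

lemma antimono_on_iff_mono_on_uminus:
  fixes g :: "'a::order \<Rightarrow> 'b::ordered_ab_group_add"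
  shows "antimono_on A g \<longleftrightarrow> mono_on A (\<lambda>x. - g x)"
  by (simp add: monotone_on_def)

lemma bernstein_form_mono_on_if_close:
  fixes u c :: "nat \<Rightarrow> real"
  assumes step: "\<And>k. k < n \<Longrightarrow> u k * real (n - k) + real (n + 1) \<le> u (Suc k) * real (Suc k)"
    and close: "\<And>k. k \<le> n \<Longrightarrow> \<bar>c k - u k\<bar> \<le> 1"
  shows "mono_on {0..1} (bernstein_form n c)"
proof (rule bernstein_form_mono_on)
  fix k assume k: "k < n"
  have "c k * real (n - k) \<le> (u k + 1) * real (n - k)"
    using close[of k] k by (intro mult_right_mono) auto
  also have "\<dots> \<le> (u (Suc k) - 1) * real (Suc k)"
    using step[OF k] k by (simp add: algebra_simps of_nat_diff)
  also have "\<dots> \<le> c (Suc k) * real (Suc k)"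
    using close[of "Suc k"] k by (intro mult_right_mono) auto
  finally show "c k * real (n - k) \<le> c (Suc k) * real (Suc k)" .
qed

lemma bernstein_form_antimono_on_if_close:
  fixes u c :: "nat \<Rightarrow> real"
  assumes step: "\<And>k. k < n \<Longrightarrow> u (Suc k) * real (Suc k) + real (n + 1) \<le> u k * real (n - k)"
    and close: "\<And>k. k \<le> n \<Longrightarrow> \<bar>c k - u k\<bar> \<le> 1"
  shows "antimono_on {0..1} (bernstein_form n c)"
proof -
  have "mono_on {0..1} (bernstein_form n (\<lambda>k. - c k))"
  proof (rule bernstein_form_mono_on_if_close[where u = "\<lambda>k. - u k"])
    fix k assume "k < n"
    with step show "- u k * real (n - k) + real (n + 1) \<le> - u (Suc k) * real (Suc k)"
      by fastforce
  qed (use close in \<open>simp add: abs_minus_commute\<close>)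
  then show ?thesis
    by (simp add: antimono_on_iff_mono_on_uminus bernstein_form_uminus)
qed

lemma has_integral_power_mult_power:
  assumes "j \<le> m"
  shows "((\<lambda>t::real. t ^ j * (1 - t) ^ (m - j)) has_integral (fact j * fact (m - j) / fact (Suc m))) {0..1}"
proof -
  have "Beta (real (Suc j)) (real (Suc (m - j))) = fact j * fact (m - j) / fact (Suc m)"
    using assms by (simp add: Beta_def Gamma_fact[symmetric] add.commute)
  then have "((\<lambda>t. t powr real j * (1 - t) powr real (m - j))
      has_integral (fact j * fact (m - j) / fact (Suc m))) {0<..<1}"
    using has_integral_Beta_real[of "real (Suc j)" "real (Suc (m - j))"]
    by (simp add: has_integral_Icc_iff_Ioo)
  then have "((\<lambda>t::real. t ^ j * (1 - t) ^ (m - j))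
      has_integral (fact j * fact (m - j) / fact (Suc m))) {0<..<1}"
    by (rule has_integral_cong[THEN iffD1, rotated]) (simp add: powr_realpow)
  then show ?thesis by (simp add: has_integral_Icc_iff_Ioo)
qed

lemma power_mult_power_sum_telescope:
  fixes t :: real
  assumes "k \<le> Suc m"
  shows "(1 - 2 * t) * ((\<Sum>j<k. t ^ j * (1 - t) ^ (m - j)) - (1 - t) ^ m)
    = t * (1 - t) ^ m - t ^ k * (1 - t) ^ (Suc m - k)"
  using assms
proof (induction k)
  case 0
  then show ?case by (simp add: algebra_simps)
next
  case (Suc k)
  then have "Suc m - k = Suc (m - k)" by simp
  with Suc show ?case by (simp add: algebra_simps)
qed

lemma phi_integrand_at_node:
  fixes t :: real
  assumes "k \<le> n" "0 < n" "0 < t" "t < 1" "t \<noteq> 1/2"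
  shows "t * (1 - t) powr (real n * (1 - real k / real n)) *
      (((1 - t) powr (real n * (real k / real n) - 1) - t powr (real n * (real k / real n) - 1))
        / (1 - 2 * t))
    = (\<Sum>j<k. t ^ j * (1 - t) ^ (n - 1 - j)) - (1 - t) ^ (n - 1)"
proof -
  have exps: "real n * (1 - real k / real n) = real (n - k)" "real n * (real k / real n) - 1 = real k - 1"
    using assms by (simp_all add: field_simps of_nat_diff)
  have "(1 - t) powr real (n - k) * (1 - t) powr (real k - 1) = (1 - t) powr real (n - 1)"
    using assms by (simp add: powr_add[symmetric] of_nat_diff)
  also have "\<dots> = (1 - t) ^ (n - 1)"
    by (rule powr_realpow) (use assms in simp)
  finally have pw: "(1 - t) powr real (n - k) * (1 - t) powr (real k - 1) = (1 - t) ^ (n - 1)"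
    "t * t powr (real k - 1) = t ^ k" "(1 - t) powr real (n - k) = (1 - t) ^ (n - k)"
    using assms by (simp_all add: powr_mult_base powr_realpow del: of_nat_diff)
  have "t * (1 - t) powr real (n - k) * ((1 - t) powr (real k - 1) - t powr (real k - 1))
      = t * ((1 - t) powr real (n - k) * (1 - t) powr (real k - 1))
        - (t * t powr (real k - 1)) * (1 - t) powr real (n - k)"
    by (simp only: right_diff_distrib mult_ac)
  also have "\<dots> = t * (1 - t) ^ (n - 1) - t ^ k * (1 - t) ^ (n - k)"
    by (simp only: pw(1,2)) (simp only: pw(3))
  also have "\<dots> = (1 - 2 * t) * ((\<Sum>j<k. t ^ j * (1 - t) ^ (n - 1 - j)) - (1 - t) ^ (n - 1))"
    using power_mult_power_sum_telescope[of k "n - 1" t] assms by simp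
  finally show ?thesis
    unfolding exps using assms by (simp add: field_simps)
qed

lemma phi_at_node:
  assumes "k \<le> n" "0 < n"
  shows "phi n (real k / real n) = (real n + 1) * ((\<Sum>j<k. fact j * fact (n - 1 - j) / fact n) - 1 / real n)"
proof -
  have fact_n: "fact (Suc (n - 1)) = (fact n :: real)" "fact n = real n * fact (n - 1)"
    using assms by (simp_all add: fact_reduce)
  have "((\<lambda>t. (\<Sum>j<k. t ^ j * (1 - t) ^ (n - 1 - j)) - (1 - t) ^ (n - 1))
      has_integral ((\<Sum>j<k. fact j * fact (n - 1 - j) / fact n) - 1 / real n)) {0..1}"
  proof (intro has_integral_diff has_integral_sum)
    show "((\<lambda>t::real. t ^ j * (1 - t) ^ (n - 1 - j)) has_integral (fact j * fact (n - 1 - j) / fact n)) {0..1}"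
      if "j \<in> {..<k}" for j
      using has_integral_power_mult_power[of j "n - 1"] that assms fact_n by simp
    show "((\<lambda>t::real. (1 - t) ^ (n - 1)) has_integral (1 / real n)) {0..1}"
      using has_integral_power_mult_power[of 0 "n - 1"] assms fact_n by simp
  qed auto
  then have "((\<lambda>t. t * (1 - t) powr (real n * (1 - real k / real n)) *
      (((1 - t) powr (real n * (real k / real n) - 1) - t powr (real n * (real k / real n) - 1))
        / (1 - 2 * t)))
      has_integral ((\<Sum>j<k. fact j * fact (n - 1 - j) / fact n) - 1 / real n)) {0..1}"
    \<comment> \<open>at t = 1/2 the integrand of phi is 0, since x / 0 = 0\<close>
    by (rule has_integral_spike_finite[of "{0, 1/2, 1}", rotated 2])
      (use phi_integrand_at_node assms in auto)
  then show ?thesis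
    unfolding phi_def by (simp add: integral_unique)
qed

lemma phi_node_step:
  assumes "k < n"
  shows "(phi n (real (Suc k) / real n) - phi n (real k / real n))
      * (real (n choose Suc k) * real (Suc k)) = real n + 1"
proof -
  have "fact k * fact (n - 1 - k) * (n - 1 choose k) = fact (n - 1)"
    using assms by (intro binomial_fact_lemma) simp
  then have binom: "fact k * fact (n - 1 - k) * real (n - 1 choose k) = fact (n - 1)"
    by (metis of_nat_fact of_nat_mult)
  have weight: "real (n choose Suc k) * real (Suc k) = real n * real (n - 1 choose k)"
    by (metis binomial_absorption mult.commute of_nat_mult)
  have "phi n (real (Suc k) / real n) - phi n (real k / real n)
      = (real n + 1) * (fact k * fact (n - 1 - k) / fact n)"
    using phi_at_node[of "Suc k" n] phi_at_node[of k n] assms by (simp add: algebra_simps)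
  then have "(phi n (real (Suc k) / real n) - phi n (real k / real n))
      * (real (n choose Suc k) * real (Suc k))
      = (real n + 1) * (fact k * fact (n - 1 - k) * real (n - 1 choose k)) * real n / fact n"
    unfolding weight by simp
  also have "\<dots> = real n + 1"
    unfolding binom using assms by (simp add: fact_reduce[of n])
  finally show ?thesis .
qed

lemma binomial_weights_eq: "real (n choose k) * real (n - k) = real (n choose Suc k) * real (Suc k)"
  by (metis binomial_absorb_comp binomial_absorption mult.commute of_nat_mult)

lemma nodes_in_unit_interval:
  assumes "k < n"
  shows "real k / real n \<in> {0..1}" "real (Suc k) / real n \<in> {0..1}"
    "real k / real n \<le> real (Suc k) / real n"
  using assms by (auto simp: divide_right_mono)

lemma bernstein_coeff_step_if_mono_on:
  assumes "mono_on {0..1} (\<lambda>x. f x - phi n x)" "k < n"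
  shows "f (real k / real n) * real (n choose k) * real (n - k) + real (n + 1)
    \<le> f (real (Suc k) / real n) * real (n choose Suc k) * real (Suc k)"
proof -
  let ?M = "real (n choose Suc k) * real (Suc k)"
  have "f (real k / real n) * real (n choose k) * real (n - k) + real (n + 1)
      = f (real k / real n) * ?M + (phi n (real (Suc k) / real n) - phi n (real k / real n)) * ?M"
    unfolding mult.assoc binomial_weights_eq phi_node_step[OF assms(2)] by simp
  also have "\<dots> = (f (real k / real n) + (phi n (real (Suc k) / real n) - phi n (real k / real n))) * ?M"
    by (simp only: distrib_right)
  also have "\<dots> \<le> f (real (Suc k) / real n) * ?M"
    using monotone_onD[OF assms(1) nodes_in_unit_interval[OF assms(2)]]
    by (intro mult_right_mono) auto
  finally show ?thesis by (simp add: mult.assoc)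
qed

lemma bernstein_coeff_step_if_antimono_on:
  assumes "antimono_on {0..1} (\<lambda>x. f x + phi n x)" "k < n"
  shows "f (real (Suc k) / real n) * real (n choose Suc k) * real (Suc k) + real (n + 1)
    \<le> f (real k / real n) * real (n choose k) * real (n - k)"
proof -
  let ?M = "real (n choose Suc k) * real (Suc k)"
  have "f (real (Suc k) / real n) * real (n choose Suc k) * real (Suc k) + real (n + 1)
      = (f (real (Suc k) / real n) + (phi n (real (Suc k) / real n) - phi n (real k / real n))) * ?M"
    unfolding distrib_right mult.assoc phi_node_step[OF assms(2)] by simp
  also have "\<dots> \<le> f (real k / real n) * ?M"
    using monotone_onD[OF assms(1) nodes_in_unit_interval[OF assms(2)]]
    by (intro mult_right_mono) auto
  finally show ?thesis by (simp add: binomial_weights_eq mult.assoc)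
qed

lemma Btilde_eq_bernstein_form:
  "Btilde n f = bernstein_form n (\<lambda>k. of_int \<lfloor>f (real k / real n) * real (n choose k)\<rfloor>)"
  by (simp add: Btilde_def[abs_def] bernstein_form_def[abs_def])

lemma Bhat_eq_bernstein_form: "Bhat n r = bernstein_form n (\<lambda>k. of_int (r k))"
  by (simp add: Bhat_def[abs_def] bernstein_form_def[abs_def])

lemma abs_floor_diff_le_one: "\<bar>of_int \<lfloor>x\<rfloor> - x\<bar> \<le> (1::real)"
  by linarith

lemma nearest_rounding_abs_diff_le_one:
  assumes "nearest_rounding n f r" "k \<le> n"
  shows "\<bar>of_int (r k) - f (real k / real n) * real (n choose k)\<bar> \<le> 1"
  using assms unfolding nearest_rounding_def by (force simp: abs_minus_commute)

theorem theorem1p8: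
  fixes f :: "real \<Rightarrow> real" and n :: nat
  assumes "f 0 \<in> \<int>" and "f 1 \<in> \<int>" and "n > 0"
  shows "(mono_on {0..1} (\<lambda>x. f x - phi n x) \<longrightarrow>
            mono_on {0..1} (Btilde n f) \<and>
            (\<forall>r. nearest_rounding n f r \<longrightarrow> mono_on {0..1} (Bhat n r)))
       \<and> (antimono_on {0..1} (\<lambda>x. f x + phi n x) \<longrightarrow>
            antimono_on {0..1} (Btilde n f) \<and>
            (\<forall>r. nearest_rounding n f r \<longrightarrow> antimono_on {0..1} (Bhat n r)))"
proof (intro conjI impI allI)
  assume "mono_on {0..1} (\<lambda>x. f x - phi n x)"
  note step = bernstein_coeff_step_if_mono_on[OF this]
  show "mono_on {0..1} (Btilde n f)"
    unfolding Btilde_eq_bernstein_form by (rule bernstein_form_mono_on_if_close[OF step abs_floor_diff_le_one])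
  show "mono_on {0..1} (Bhat n r)" if "nearest_rounding n f r" for r
    unfolding Bhat_eq_bernstein_form
    by (rule bernstein_form_mono_on_if_close[OF step nearest_rounding_abs_diff_le_one[OF that]])
next
  assume "antimono_on {0..1} (\<lambda>x. f x + phi n x)"
  note step = bernstein_coeff_step_if_antimono_on[OF this]
  show "antimono_on {0..1} (Btilde n f)"
    unfolding Btilde_eq_bernstein_form by (rule bernstein_form_antimono_on_if_close[OF step abs_floor_diff_le_one])
  show "antimono_on {0..1} (Bhat n r)" if "nearest_rounding n f r" for r
    unfolding Bhat_eq_bernstein_form
    by (rule bernstein_form_antimono_on_if_close[OF step nearest_rounding_abs_diff_le_one[OF that]])
qed

end
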